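(* Let $k>0$ and $p\in[1,\infty]$, and let $X,Y$ be compact, fully supported pmm-spaces. Then $\mathsf{PGW}^k_p(X,Y)=0$ if and only if $X$ and $Y$ are isomorphic.
   Context: A pmm-space is a triple $(X,d_X,\mu_X)$ with $(X,d_X)$ a complete separable metric space and $\mu_X$ a Borel probability measure; compact means $(X,d_X)$ compact; fully supported means $\operatorname{supp}\mu_X=X$. $X$ and $Y$ are isomorphic if there is a measure-preserving isometric bijection $X\to Y$. For a measure $\pi$ on $X\times Y$, $\pi_X,\pi_Y$ are its marginals; for $p<\infty$, $\|d_X-d_Y\|_{L^p(\pi\otimes\pi)}=\left(\iint|d_X(x,x')-d_Y(y,y')|^p\,d\pi(x,y)\,d\pi(x',y')\right)^{1/p}$, and for $p=\infty$ the $\pi\otimes\pi$-essential supremum. For a scalar $\epsilon\ge0$: $\mathsf{PGW}_{\epsilon,p}(X,Y)=\inf\{\|d_X-d_Y\|_{L^p(\pi\otimes\pi)}:\pi$ Borel probability measure on $X\times Y$ with $\pi_X\le(1+\epsilon)\mu_X$ and $\pi_Y\le(1+\epsilon)\mu_Y$ setwise$\}$. The robust partial Gromov–Wasserstein distance is $\mathsf{PGW}^k_p(X,Y)=\inf\{\frac{\epsilon}{1+\epsilon}:\epsilon\ge0,\ \mathsf{PGW}_{\epsilon,p}(X,Y)\le k\epsilon\}$. *)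

theory Defs
  imports "HOL-Probability.Probability"
begin

definition borel_sets_of :: "'a set \<Rightarrow> ('a \<Rightarrow> 'a \<Rightarrow> real) \<Rightarrow> 'a set set" where
  "borel_sets_of X d = sigma_sets X {U. openin (Metric_space.mtopology X d) U}"

definition pmm_space :: "'a set \<Rightarrow> ('a \<Rightarrow> 'a \<Rightarrow> real) \<Rightarrow> 'a measure \<Rightarrow> bool" where
  "pmm_space X d \<mu> \<longleftrightarrow> Metric_space X d \<and> Metric_space.mcomplete X d
     \<and> separable_space (Metric_space.mtopology X d)
     \<and> prob_space \<mu> \<and> space \<mu> = X \<and> sets \<mu> = borel_sets_of X d"

definition pmm_compact :: "'a set \<Rightarrow> ('a \<Rightarrow> 'a \<Rightarrow> real) \<Rightarrow> bool" where
  "pmm_compact X d \<longleftrightarrow> compact_space (Metric_space.mtopology X d)"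

definition mm_support :: "'a set \<Rightarrow> ('a \<Rightarrow> 'a \<Rightarrow> real) \<Rightarrow> 'a measure \<Rightarrow> 'a set" where
  "mm_support X d \<mu> = {x \<in> X. \<forall>U. openin (Metric_space.mtopology X d) U \<and> x \<in> U \<longrightarrow> emeasure \<mu> U > 0}"

definition fully_supported :: "'a set \<Rightarrow> ('a \<Rightarrow> 'a \<Rightarrow> real) \<Rightarrow> 'a measure \<Rightarrow> bool" where
  "fully_supported X d \<mu> \<longleftrightarrow> mm_support X d \<mu> = X"

definition pmm_isomorphic ::
  "'a set \<Rightarrow> ('a \<Rightarrow> 'a \<Rightarrow> real) \<Rightarrow> 'a measure \<Rightarrow> 'b set \<Rightarrow> ('b \<Rightarrow> 'b \<Rightarrow> real) \<Rightarrow> 'b measure \<Rightarrow> bool" where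
  "pmm_isomorphic X dX \<mu>X Y dY \<mu>Y \<longleftrightarrow>
     (\<exists>f. bij_betw f X Y \<and> (\<forall>x\<in>X. \<forall>x'\<in>X. dY (f x) (f x') = dX x x')
          \<and> f \<in> measurable \<mu>X \<mu>Y \<and> distr \<mu>X \<mu>Y f = \<mu>Y)"

definition dist_gap :: "('a \<Rightarrow> 'a \<Rightarrow> real) \<Rightarrow> ('b \<Rightarrow> 'b \<Rightarrow> real) \<Rightarrow> ('a \<times> 'b) \<times> ('a \<times> 'b) \<Rightarrow> real" where
  "dist_gap dX dY z = (case z of ((x, y), (x', y')) \<Rightarrow> \<bar>dX x x' - dY y y'\<bar>)"

text \<open>L^p(pi x pi) norm of d_X - d_Y, for p in [1,infinity] (p = top means p = infinity).\<close>
definition lp_distortion ::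
  "('a \<Rightarrow> 'a \<Rightarrow> real) \<Rightarrow> ('b \<Rightarrow> 'b \<Rightarrow> real) \<Rightarrow> ennreal \<Rightarrow> ('a \<times> 'b) measure \<Rightarrow> ennreal" where
  "lp_distortion dX dY p \<pi> =
     (if p = \<top> then e2ennreal (esssup (\<pi> \<Otimes>\<^sub>M \<pi>) (\<lambda>z. ereal (dist_gap dX dY z)))
      else (let I = (\<integral>\<^sup>+ z. ennreal (dist_gap dX dY z powr enn2real p) \<partial>(\<pi> \<Otimes>\<^sub>M \<pi>))
            in if I = \<top> then \<top> else ennreal (enn2real I powr (1 / enn2real p))))"

definition pgw_admissible ::
  "'a measure \<Rightarrow> 'b measure \<Rightarrow> real \<Rightarrow> ('a \<times> 'b) measure \<Rightarrow> bool" where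
  "pgw_admissible \<mu>X \<mu>Y \<epsilon> \<pi> \<longleftrightarrow>
     prob_space \<pi> \<and> sets \<pi> = sets (\<mu>X \<Otimes>\<^sub>M \<mu>Y)
     \<and> (\<forall>A\<in>sets \<mu>X. emeasure (distr \<pi> \<mu>X fst) A \<le> ennreal (1 + \<epsilon>) * emeasure \<mu>X A)
     \<and> (\<forall>B\<in>sets \<mu>Y. emeasure (distr \<pi> \<mu>Y snd) B \<le> ennreal (1 + \<epsilon>) * emeasure \<mu>Y B)"

definition PGW_eps ::
  "('a \<Rightarrow> 'a \<Rightarrow> real) \<Rightarrow> 'a measure \<Rightarrow> ('b \<Rightarrow> 'b \<Rightarrow> real) \<Rightarrow> 'b measure \<Rightarrow> real \<Rightarrow> ennreal \<Rightarrow> ennreal" where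
  "PGW_eps dX \<mu>X dY \<mu>Y \<epsilon> p =
     Inf {lp_distortion dX dY p \<pi> | \<pi>. pgw_admissible \<mu>X \<mu>Y \<epsilon> \<pi>}"

definition PGW_robust ::
  "('a \<Rightarrow> 'a \<Rightarrow> real) \<Rightarrow> 'a measure \<Rightarrow> ('b \<Rightarrow> 'b \<Rightarrow> real) \<Rightarrow> 'b measure \<Rightarrow> real \<Rightarrow> ennreal \<Rightarrow> real" where
  "PGW_robust dX \<mu>X dY \<mu>Y k p =
     Inf {\<epsilon> / (1 + \<epsilon>) | \<epsilon>. \<epsilon> \<ge> 0 \<and> PGW_eps dX \<mu>X dY \<mu>Y \<epsilon> p \<le> ennreal (k * \<epsilon>)}"

end

theory Submission
  imports Defs
begin

(* If X and Y are isomorphic, the graph of the isomorphism is an admissible plan with eps = 0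
   and distortion 0, so the robust distance vanishes.

   Conversely, a vanishing robust distance provides admissible plans pi whose marginal excess
   eps and distortion are both arbitrarily small. At a scale r call x and y coupled when
   pi (B(x,r) x B(y,r)) >= c for a suitable threshold c. Balls have uniformly positive measure
   (compactness and full support) and the marginals of pi are almost mu_X and mu_Y, so every
   point is coupled to some point. The L^p distortion is at least c^2 times the gap
   |d_X x x' - d_Y y y'| - 4r between two coupled boxes, so coupling distorts distances by at
   most 5r. Finally all pairs outside a set of small pi-measure are coupled. Letting r -> 0,
   the limit along an ultrafilter of the partners of x defines an isometry g of X onto Y, and
   the pairs outside the small sets give mu_X (g^-1 K) <= mu_Y K for closed K, which forces
   the push-forward of mu_X to be mu_Y. *)

section \<open>Bounds on the distortion of a plan\<close>

lemma dist_gap_simp [simp]: "dist_gap dX dY ((x, y), (x', y')) = \<bar>dX x x' - dY y y'\<bar>"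
  by (simp add: dist_gap_def)

lemma dist_gap_nonneg: "0 \<le> dist_gap dX dY z"
  by (cases z) (auto simp: dist_gap_def)

lemma esssup_ge_if_pos_measure:
  assumes E: "E \<in> sets M" "emeasure M E \<noteq> 0" and ge: "\<And>z. z \<in> E \<Longrightarrow> c \<le> f z"
  shows "c \<le> esssup M f"
proof (rule ccontr)
  assume less: "\<not> c \<le> esssup M f"
  have "AE z in M. z \<notin> E"
    using esssup_AE[of f M] by (rule eventually_mono) (use ge less in force)
  then have "E \<in> null_sets M"
    using AE_iff_null_sets[OF E(1)] by simp
  with E(2) show False by (auto dest: null_setsD1)
qed

lemma one_le_enn2real: "1 \<le> p \<Longrightarrow> p \<noteq> \<top> \<Longrightarrow> 1 \<le> enn2real p"
  by (metis enn2real_1 enn2real_mono top.not_eq_extremum)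

lemma mult_le_powr_mult:
  fixes a m q :: real
  assumes "0 \<le> a" "0 \<le> m" "m \<le> 1" "1 \<le> q"
  shows "a * m \<le> (a powr q * m) powr (1 / q)"
proof -
  have "m \<le> m powr (1 / q)"
    using assms by (cases "m = 0") (auto intro: order_trans[OF eq_refl powr_mono'[of "1/q" 1 m]])
  then have "a * m \<le> a * m powr (1 / q)" using assms(1) by (rule mult_left_mono)
  also have "\<dots> = (a powr q * m) powr (1 / q)"
    using assms by (simp add: powr_mult powr_powr)
  finally show ?thesis .
qed

lemma lp_distortion_ge_measure:
  fixes \<pi> :: "('a \<times> 'b) measure"
  assumes \<pi>: "prob_space \<pi>" and p: "1 \<le> p" and E: "E \<in> sets (\<pi> \<Otimes>\<^sub>M \<pi>)"
    and a: "0 \<le> a" and ge: "\<And>z. z \<in> E \<Longrightarrow> a \<le> dist_gap dX dY z"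
  shows "ennreal (a * measure (\<pi> \<Otimes>\<^sub>M \<pi>) E) \<le> lp_distortion dX dY p \<pi>"
proof -
  interpret PP: prob_space "\<pi> \<Otimes>\<^sub>M \<pi>" by (rule prob_space_pair[OF \<pi> \<pi>])
  define m where "m = measure (\<pi> \<Otimes>\<^sub>M \<pi>) E"
  have m: "0 \<le> m" "m \<le> 1" by (simp_all add: m_def)
  show ?thesis
  proof (cases "p = \<top>")
    case True
    show ?thesis
    proof (cases "m = 0")
      case False
      then have "emeasure (\<pi> \<Otimes>\<^sub>M \<pi>) E \<noteq> 0" by (simp add: m_def PP.emeasure_eq_measure)
      then have "ereal a \<le> esssup (\<pi> \<Otimes>\<^sub>M \<pi>) (\<lambda>z. ereal (dist_gap dX dY z))"
        using E ge by (intro esssup_ge_if_pos_measure) auto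
      then have "ennreal a \<le> e2ennreal (esssup (\<pi> \<Otimes>\<^sub>M \<pi>) (\<lambda>z. ereal (dist_gap dX dY z)))"
        by (metis e2ennreal_enn2ereal e2ennreal_mono enn2ereal_ennreal a)
      moreover have "ennreal (a * m) \<le> ennreal a"
        using a m by (intro ennreal_leI mult_left_le) auto
      ultimately show ?thesis using True by (simp add: lp_distortion_def m_def)
    qed (simp add: m_def)
  next
    case False
    define q where "q = enn2real p"
    have q: "1 \<le> q" using one_le_enn2real[OF p False] by (simp add: q_def)
    define I where "I = (\<integral>\<^sup>+ z. ennreal (dist_gap dX dY z powr q) \<partial>(\<pi> \<Otimes>\<^sub>M \<pi>))"
    have "(\<integral>\<^sup>+ z. ennreal (a powr q) * indicator E z \<partial>(\<pi> \<Otimes>\<^sub>M \<pi>)) \<le> I"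
      unfolding I_def
      using ge a q by (intro nn_integral_mono) (auto simp: indicator_def intro!: ennreal_leI powr_mono2)
    then have I_ge: "ennreal (a powr q * m) \<le> I"
      using E by (simp add: nn_integral_cmult_indicator PP.emeasure_eq_measure ennreal_mult m_def)
    show ?thesis
    proof (cases "I = \<top>")
      case I_fin: False
      have "a powr q * m \<le> enn2real I"
        using I_ge I_fin by (metis enn2real_ennreal enn2real_mono top.not_eq_extremum a m(1)
            mult_nonneg_nonneg powr_ge_zero)
      then have "(a powr q * m) powr (1 / q) \<le> enn2real I powr (1 / q)"
        using a m q by (intro powr_mono2) auto
      moreover have "a * m \<le> (a powr q * m) powr (1 / q)"
        using a m q by (rule mult_le_powr_mult)
      ultimately show ?thesis using False I_fin
        by (simp add: lp_distortion_def I_def q_def m_def Let_def ennreal_leI)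
    qed (use False in \<open>simp add: lp_distortion_def I_def q_def Let_def\<close>)
  qed
qed

lemma lp_distortion_le_AE_bound:
  fixes \<pi> :: "('a \<times> 'b) measure"
  assumes \<pi>: "prob_space \<pi>" and p: "1 \<le> p" and D: "0 \<le> D"
    and meas: "dist_gap dX dY \<in> borel_measurable (\<pi> \<Otimes>\<^sub>M \<pi>)"
    and le: "AE z in \<pi> \<Otimes>\<^sub>M \<pi>. dist_gap dX dY z \<le> D"
  shows "lp_distortion dX dY p \<pi> \<le> ennreal D"
proof -
  interpret PP: prob_space "\<pi> \<Otimes>\<^sub>M \<pi>" by (rule prob_space_pair[OF \<pi> \<pi>])
  show ?thesis
  proof (cases "p = \<top>")
    case True
    have "esssup (\<pi> \<Otimes>\<^sub>M \<pi>) (\<lambda>z. ereal (dist_gap dX dY z)) \<le> ereal D"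
      using le by (intro esssup_I borel_measurable_ereal[OF meas]) auto
    then have "e2ennreal (esssup (\<pi> \<Otimes>\<^sub>M \<pi>) (\<lambda>z. ereal (dist_gap dX dY z))) \<le> ennreal D"
      by (metis e2ennreal_enn2ereal e2ennreal_mono enn2ereal_ennreal D)
    then show ?thesis using True by (simp add: lp_distortion_def)
  next
    case False
    define q where "q = enn2real p"
    have q: "1 \<le> q" using one_le_enn2real[OF p False] by (simp add: q_def)
    define I where "I = (\<integral>\<^sup>+ z. ennreal (dist_gap dX dY z powr q) \<partial>(\<pi> \<Otimes>\<^sub>M \<pi>))"
    have "I \<le> (\<integral>\<^sup>+ z. ennreal (D powr q) \<partial>(\<pi> \<Otimes>\<^sub>M \<pi>))"
      unfolding I_def using le
      by (intro nn_integral_mono_AE, elim eventually_mono)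
        (use q dist_gap_nonneg in \<open>auto intro!: ennreal_leI powr_mono2\<close>)
    then have I_le: "I \<le> ennreal (D powr q)" by (simp add: PP.emeasure_space_1)
    then have I_fin: "I \<noteq> \<top>" by (metis ennreal_neq_top neq_top_trans)
    have "enn2real I powr (1 / q) \<le> (D powr q) powr (1 / q)"
      using I_le q by (intro powr_mono2) (auto simp: enn2real_leI)
    also have "\<dots> = D" using q D by (simp add: powr_powr)
    finally show ?thesis using False I_fin
      by (simp add: lp_distortion_def I_def q_def Let_def ennreal_leI)
  qed
qed

section \<open>Ultrafilters and compact metric spaces\<close>

definition ultrafilter :: "'a filter \<Rightarrow> bool" where
  "ultrafilter U \<longleftrightarrow> U \<noteq> bot \<and> (\<forall>P. eventually P U \<or> eventually (\<lambda>x. \<not> P x) U)"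

lemma ex_ultrafilter_le:
  assumes F: "F \<noteq> bot"
  shows "\<exists>U. ultrafilter U \<and> U \<le> F"
proof -
  define A where "A = {G. G \<noteq> bot \<and> G \<le> F}"
  define R where "R = (\<lambda>G H :: 'a filter. H \<le> G)"
  have po: "partial_order_on A (relation_of R A)"
    by (rule partial_order_on_relation_ofI) (auto simp: R_def)
  have chain_bound: "\<exists>u\<in>A. \<forall>a\<in>C. R a u" if C: "C \<in> Chains (relation_of R A)" for C
  proof (cases "C = {}")
    case True
    then show ?thesis using F by (auto simp: A_def)
  next
    case False
    have CA: "C \<subseteq> A" using C unfolding Chains_def relation_of_def by auto
    have "Inf C = bot \<longleftrightarrow> (\<exists>G\<in>C. G = bot)"
      unfolding trivial_limit_def
      using C False by (intro eventually_Inf_base) (auto simp: Chains_def relation_of_def R_def)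
    then have "Inf C \<noteq> bot" using CA by (auto simp: A_def)
    moreover obtain G where "G \<in> C" using False by blast
    then have "Inf C \<le> F" using CA by (auto simp: A_def intro: Inf_lower2)
    ultimately show ?thesis by (auto simp: A_def R_def intro: Inf_lower)
  qed
  obtain U where U: "U \<in> A" and max: "\<And>G. G \<in> A \<Longrightarrow> R U G \<Longrightarrow> G = U"
    using predicate_Zorn[OF po chain_bound] by blast
  have "eventually P U \<or> eventually (\<lambda>x. \<not> P x) U" for P
  proof (rule ccontr)
    assume neither: "\<not> ?thesis"
    define G where "G = inf U (principal {x. P x})"
    have "G \<noteq> bot"
      using neither by (simp add: G_def trivial_limit_def eventually_inf_principal)
    moreover have "G \<le> F" using U by (auto simp: A_def G_def intro: le_infI1)
    ultimately have "G = U" using max by (simp add: A_def R_def G_def)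
    moreover have "eventually P G" by (simp add: G_def eventually_inf_principal)
    ultimately have "eventually P U" by simp
    with neither show False by blast
  qed
  with U show ?thesis by (auto simp: ultrafilter_def A_def)
qed

context Metric_space
begin

lemma ultrafilter_limitin:
  assumes M: "compact_space mtopology" and U: "ultrafilter U" and f: "\<And>n. f n \<in> M"
  shows "\<exists>l. limitin mtopology f l U"
proof (rule ccontr)
  assume "\<nexists>l. limitin mtopology f l U"
  then have "\<forall>l\<in>M. \<exists>\<delta>>0. eventually (\<lambda>n. \<not> d (f n) l < \<delta>) U"
    using U f by (force simp: ultrafilter_def limitin_metric)
  then obtain \<delta> where \<delta>: "\<And>l. l \<in> M \<Longrightarrow> \<delta> l > 0"
    "\<And>l. l \<in> M \<Longrightarrow> eventually (\<lambda>n. \<not> d (f n) l < \<delta> l) U"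
    by metis
  have "compactin mtopology M" using M by (simp add: compact_space_def)
  moreover have "M \<subseteq> \<Union>((\<lambda>l. mball l (\<delta> l)) ` M)" using \<delta>(1) by force
  moreover have "\<forall>V\<in>(\<lambda>l. mball l (\<delta> l)) ` M. openin mtopology V" by auto
  ultimately obtain \<F> where \<F>: "finite \<F>" "\<F> \<subseteq> (\<lambda>l. mball l (\<delta> l)) ` M" "M \<subseteq> \<Union>\<F>"
    unfolding compactin_def by blast
  obtain L where L: "L \<subseteq> M" "finite L" "\<F> = (\<lambda>l. mball l (\<delta> l)) ` L"
    using finite_subset_image[OF \<F>(1,2)] by blast
  have "eventually (\<lambda>n. \<forall>l\<in>L. \<not> d (f n) l < \<delta> l) U"
    using L(1,2) \<delta>(2) by (intro eventually_ball_finite) auto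
  then have "\<exists>n. \<forall>l\<in>L. \<not> d (f n) l < \<delta> l"
    using U by (intro eventually_happens') (simp_all add: ultrafilter_def)
  then obtain n where n: "\<forall>l\<in>L. \<not> d (f n) l < \<delta> l" ..
  obtain l where "l \<in> L" "f n \<in> mball l (\<delta> l)" using \<F>(3) L(3) f[of n] by auto
  with n show False by (simp add: commute)
qed

lemma diameter_bounded:
  assumes "compact_space mtopology"
  shows "\<exists>D\<ge>0. \<forall>x\<in>M. \<forall>y\<in>M. d x y \<le> D"
proof -
  have "mbounded M"
    using assms by (auto simp: compact_space_def intro: compactin_imp_mbounded)
  then show ?thesis unfolding mbounded_alt_pos by (blast intro: less_imp_le)
qed

lemma Inter_thickenings_closedin:
  assumes F: "closedin mtopology F"
  shows "(\<Inter>n. \<Union>z\<in>F. mball z (inverse (real (Suc n)))) = F"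
proof
  show "F \<subseteq> (\<Inter>n. \<Union>z\<in>F. mball z (inverse (real (Suc n))))"
    using closedin_subset[OF F] by force
next
  show "(\<Inter>n. \<Union>z\<in>F. mball z (inverse (real (Suc n)))) \<subseteq> F"
  proof
    fix x assume x: "x \<in> (\<Inter>n. \<Union>z\<in>F. mball z (inverse (real (Suc n))))"
    then have "x \<in> M" by auto
    show "x \<in> F"
    proof (rule ccontr)
      assume "x \<notin> F"
      then obtain r where r: "r > 0" "mball x r \<subseteq> M - F"
        using F \<open>x \<in> M\<close> by (auto simp: closedin_def openin_mtopology)
      obtain n where n: "inverse (real (Suc n)) < r"
        using r(1) reals_Archimedean by blast
      obtain z where z: "z \<in> F" "x \<in> mball z (inverse (real (Suc n)))"
        using x by blast
      with n have "z \<in> mball x r" by (auto simp: commute)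
      with r z(1) show False by blast
    qed
  qed
qed

lemma tendsto_Min_dist_net:
  assumes N: "\<And>n. finite (N n)" "\<And>n. N n \<noteq> {}" "\<And>n. N n \<subseteq> M"
      "\<And>n. M \<subseteq> (\<Union>s\<in>N n. mball s (inverse (real (Suc n))))"
    and xy: "x \<in> M" "y \<in> M"
  shows "(\<lambda>n. Min ((\<lambda>s. d x s + d s y) ` N n)) \<longlonglongrightarrow> d x y"
proof -
  have lower: "d x y \<le> Min ((\<lambda>s. d x s + d s y) ` N n)" for n
    using N(1,2,3) xy by (subst Min_ge_iff) (auto intro!: triangle)
  have upper: "Min ((\<lambda>s. d x s + d s y) ` N n) \<le> d x y + 2 * inverse (real (Suc n))" for n
  proof -
    obtain s where s: "s \<in> N n" "d s x < inverse (real (Suc n))"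
      using N(4)[of n] xy by auto
    have "Min ((\<lambda>s. d x s + d s y) ` N n) \<le> d x s + d s y"
      using N(1) s by (intro Min_le) auto
    also have "d s y \<le> d s x + d x y"
      using s N(3) xy by (intro triangle) auto
    finally show ?thesis using s(2) commute[of s x] by linarith
  qed
  have "eventually (\<lambda>n. d x y \<le> Min ((\<lambda>s. d x s + d s y) ` N n)) sequentially"
    using lower by simp
  moreover have "eventually (\<lambda>n. Min ((\<lambda>s. d x s + d s y) ` N n) \<le> d x y + 2 * inverse (real (Suc n)))
      sequentially"
    using upper by simp
  moreover have "(\<lambda>n. d x y + 2 * inverse (real (Suc n))) \<longlonglongrightarrow> d x y + 2 * 0"
    by (intro tendsto_intros LIMSEQ_inverse_real_of_nat)
  ultimately show ?thesis
    by (auto intro: tendsto_sandwich[OF _ _ tendsto_const])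
qed

lemma dist_diff_le:
  assumes "a \<in> M" "b \<in> M" "a' \<in> M" "b' \<in> M"
  shows "\<bar>d a b - d a' b'\<bar> \<le> d a a' + d b b'"
  using triangle[of a a' b] triangle[of a' b' b] triangle[of a' a b'] triangle[of a b b'] assms
  by (simp add: commute abs_le_iff)

end

section \<open>Borel probability measures on metric spaces\<close>

locale metric_borel_prob = Metric_space M d for M :: "'a set" and d +
  fixes \<mu> :: "'a measure"
  assumes prob: "prob_space \<mu>" and space_eq: "space \<mu> = M" and sets_eq: "sets \<mu> = borel_sets_of M d"
begin

sublocale P: prob_space \<mu> by (rule prob)

lemma openin_sets: "openin mtopology U \<Longrightarrow> U \<in> sets \<mu>"
  unfolding sets_eq borel_sets_of_def by (rule sigma_sets.Basic) simp

lemma closedin_sets: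
  assumes "closedin mtopology F"
  shows "F \<in> sets \<mu>"
proof -
  have "space \<mu> - (M - F) \<in> sets \<mu>"
    using assms by (intro sets.compl_sets openin_sets) (simp add: closedin_def)
  moreover have "space \<mu> - (M - F) = F"
    using closedin_subset[OF assms] by (auto simp: space_eq)
  ultimately show ?thesis by simp
qed

lemma mball_sets [simp]: "mball x r \<in> sets \<mu>"
  by (rule openin_sets) simp

lemma measure_thickening_le:
  assumes F: "closedin mtopology F" and e: "0 < e"
  shows "\<exists>\<delta>>0. measure \<mu> (\<Union>z\<in>F. mball z \<delta>) \<le> measure \<mu> F + e"
proof -
  define A where "A n = (\<Union>z\<in>F. mball z (inverse (real (Suc n))))" for n
  have "range A \<subseteq> sets \<mu>" by (auto simp: A_def intro!: openin_sets)
  moreover have "decseq A"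
    unfolding A_def by (intro decseq_SucI UN_mono mball_subset_concentric order_refl) (simp add: field_simps)
  ultimately have "(\<lambda>n. measure \<mu> (A n)) \<longlonglongrightarrow> measure \<mu> (\<Inter>n. A n)"
    by (rule P.finite_Lim_measure_decseq)
  moreover have "(\<Inter>n. A n) = F"
    unfolding A_def by (rule Inter_thickenings_closedin[OF F])
  ultimately have "eventually (\<lambda>n. measure \<mu> (A n) < measure \<mu> F + e) sequentially"
    using e by (intro order_tendstoD(2)) auto
  then obtain n where "measure \<mu> (A n) < measure \<mu> F + e"
    by (auto simp: eventually_sequentially)
  then show ?thesis by (intro exI[of _ "inverse (real (Suc n))"]) (auto simp: A_def)
qed

lemma measure_eq_if_openin_eq:
  assumes \<nu>: "metric_borel_prob M d \<nu>"
    and eq: "\<And>V. openin mtopology V \<Longrightarrow> measure \<nu> V = measure \<mu> V"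
  shows "\<nu> = \<mu>"
proof -
  interpret N: metric_borel_prob M d \<nu> by (rule \<nu>)
  show ?thesis
  proof (rule measure_eqI_generator_eq[where E="{U. openin mtopology U}" and \<Omega>=M and A="\<lambda>_. M"])
    show "Int_stable {U. openin mtopology U}" by (auto simp: Int_stable_def)
    show "{U. openin mtopology U} \<subseteq> Pow M" using openin_subset by fastforce
    show "sets \<nu> = sigma_sets M {U. openin mtopology U}" "sets \<mu> = sigma_sets M {U. openin mtopology U}"
      by (simp_all add: N.sets_eq sets_eq borel_sets_of_def)
    show "range (\<lambda>_. M) \<subseteq> {U. openin mtopology U}" "(\<Union>i::nat. M) = M" "emeasure \<nu> M \<noteq> \<infinity>"
      by auto
  next
    fix V assume "V \<in> {U. openin mtopology U}"
    then show "emeasure \<nu> V = emeasure \<mu> V"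
      using eq by (simp add: N.P.emeasure_eq_measure P.emeasure_eq_measure)
  qed
qed

text \<open>By complements the inequality reverses on open sets; since closed sets are decreasing limits
  of open thickenings, it then reverses on closed sets too.\<close>
lemma measure_eq_if_closedin_le:
  assumes \<nu>: "metric_borel_prob M d \<nu>"
    and le: "\<And>K. closedin mtopology K \<Longrightarrow> measure \<nu> K \<le> measure \<mu> K"
  shows "\<nu> = \<mu>"
proof -
  interpret N: metric_borel_prob M d \<nu> by (rule \<nu>)
  have compl: "measure \<mu> (M - V) = 1 - measure \<mu> V" "measure \<nu> (M - V) = 1 - measure \<nu> V"
    and closed: "closedin mtopology (M - V)" and diff: "M - (M - V) = V"
    if V: "openin mtopology V" for V
    using V P.prob_compl N.P.prob_compl openin_sets[OF V] openin_subset[OF V]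
    by (auto simp: space_eq N.space_eq N.sets_eq sets_eq closedin_diff)
  have open_ge: "measure \<mu> V \<le> measure \<nu> V" if V: "openin mtopology V" for V
    using le[OF closed[OF V]] compl[OF V] by simp
  have closed_ge: "measure \<mu> K \<le> measure \<nu> K" if K: "closedin mtopology K" for K
  proof (rule field_le_epsilon)
    fix e :: real assume "0 < e"
    then obtain \<delta> where "\<delta> > 0" and \<delta>: "measure \<nu> (\<Union>z\<in>K. mball z \<delta>) \<le> measure \<nu> K + e"
      using N.measure_thickening_le[OF K] by blast
    have "measure \<mu> K \<le> measure \<mu> (\<Union>z\<in>K. mball z \<delta>)"
      using closedin_subset[OF K] \<open>\<delta> > 0\<close>
      by (intro P.finite_measure_mono openin_sets) (auto simp: openin_clauses)
    also have "\<dots> \<le> measure \<nu> (\<Union>z\<in>K. mball z \<delta>)" by (intro open_ge) auto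
    finally show "measure \<mu> K \<le> measure \<nu> K + e" using \<delta> by linarith
  qed
  show ?thesis
  proof (rule measure_eq_if_openin_eq[OF \<nu>])
    fix V assume V: "openin mtopology V"
    show "measure \<nu> V = measure \<mu> V"
      using le[OF closed[OF V]] closed_ge[OF closed[OF V]] compl[OF V] by simp
  qed
qed

end

locale compact_pmm_space = metric_borel_prob +
  assumes compact: "compact_space mtopology" and full_support: "fully_supported M d \<mu>"
begin

lemma nonempty: "M \<noteq> {}"
  using P.not_empty space_eq by simp

lemma finite_mball_cover:
  assumes "0 < r"
  shows "\<exists>N. finite N \<and> N \<noteq> {} \<and> N \<subseteq> M \<and> M \<subseteq> (\<Union>s\<in>N. mball s r)"
proof -
  obtain N where "finite N" "N \<subseteq> M" "M \<subseteq> (\<Union>s\<in>N. mball s r)"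
    using compact assms unfolding compact_space_eq_mcomplete_mtotally_bounded mtotally_bounded_def
    by blast
  moreover from this have "N \<noteq> {}" using nonempty by auto
  ultimately show ?thesis by blast
qed

lemma measure_mball_pos:
  assumes "x \<in> M" "0 < r"
  shows "0 < measure \<mu> (mball x r)"
proof -
  have "x \<in> mm_support M d \<mu>" using full_support assms by (simp add: fully_supported_def)
  then have "0 < emeasure \<mu> (mball x r)" using assms unfolding mm_support_def by simp
  then show ?thesis by (simp add: P.emeasure_eq_measure)
qed

lemma measure_mball_uniform_pos:
  assumes r: "0 < r"
  shows "\<exists>\<rho>>0. \<forall>x\<in>M. \<rho> \<le> measure \<mu> (mball x r)"
proof -
  obtain N where N: "finite N" "N \<noteq> {}" "N \<subseteq> M" "M \<subseteq> (\<Union>s\<in>N. mball s (r/2))"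
    using finite_mball_cover[of "r/2"] r by auto
  define \<rho> where "\<rho> = Min ((\<lambda>s. measure \<mu> (mball s (r/2))) ` N)"
  have "\<rho> > 0"
    using N r measure_mball_pos by (auto simp: \<rho>_def)
  moreover have "\<rho> \<le> measure \<mu> (mball x r)" if x: "x \<in> M" for x
  proof -
    obtain s where s: "s \<in> N" "x \<in> mball s (r/2)" using N(4) x by blast
    then have "mball s (r/2) \<subseteq> mball x r" by (intro mball_subset) (auto simp: commute)
    then have "measure \<mu> (mball s (r/2)) \<le> measure \<mu> (mball x r)"
      by (intro P.finite_measure_mono) auto
    moreover have "\<rho> \<le> measure \<mu> (mball s (r/2))" unfolding \<rho>_def using N s by (intro Min_le) auto
    ultimately show ?thesis by linarith
  qed
  ultimately show ?thesis by blast
qed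

lemma borel_measurable_dist_left: "s \<in> M \<Longrightarrow> (\<lambda>x. d x s) \<in> borel_measurable \<mu>"
proof -
  assume s: "s \<in> M"
  have "{x \<in> space \<mu>. d x s < a} = mball s a" for a
    using s by (auto simp: space_eq commute)
  then show ?thesis unfolding borel_measurable_iff_less by simp
qed

text \<open>The distance is the pointwise limit of \<open>min\<^sub>s d x s + d s y\<close> over finer and finer finite nets.\<close>
lemma borel_measurable_dist: "(\<lambda>z. d (fst z) (snd z)) \<in> borel_measurable (\<mu> \<Otimes>\<^sub>M \<mu>)"
proof -
  have "\<forall>n. \<exists>N. finite N \<and> N \<noteq> {} \<and> N \<subseteq> M \<and> M \<subseteq> (\<Union>s\<in>N. mball s (inverse (real (Suc n))))"
    using finite_mball_cover by simp
  then obtain N where "\<forall>n. finite (N n) \<and> N n \<noteq> {} \<and> N n \<subseteq> M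
      \<and> M \<subseteq> (\<Union>s\<in>N n. mball s (inverse (real (Suc n))))"
    by (auto dest: choice)
  then have N: "\<And>n. finite (N n)" "\<And>n. N n \<noteq> {}" "\<And>n. N n \<subseteq> M"
      "\<And>n. M \<subseteq> (\<Union>s\<in>N n. mball s (inverse (real (Suc n))))"
    by auto
  show ?thesis
  proof (rule borel_measurable_LIMSEQ_real[where u="\<lambda>n z. Min ((\<lambda>s. d (fst z) s + d s (snd z)) ` N n)"])
    fix n
    show "(\<lambda>z. Min ((\<lambda>s. d (fst z) s + d s (snd z)) ` N n)) \<in> borel_measurable (\<mu> \<Otimes>\<^sub>M \<mu>)"
    proof (rule borel_measurable_Min[OF N(1)])
      fix s assume "s \<in> N n"
      then have s: "s \<in> M" using N(3) by auto
      have "(\<lambda>z. d (fst z) s + d (snd z) s) \<in> borel_measurable (\<mu> \<Otimes>\<^sub>M \<mu>)"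
        using measurable_compose[OF measurable_fst[of \<mu> \<mu>] borel_measurable_dist_left[OF s]]
          measurable_compose[OF measurable_snd[of \<mu> \<mu>] borel_measurable_dist_left[OF s]]
        by (intro borel_measurable_add) (simp_all add: o_def)
      then show "(\<lambda>z. d (fst z) s + d s (snd z)) \<in> borel_measurable (\<mu> \<Otimes>\<^sub>M \<mu>)"
        by (simp add: commute)
    qed
  next
    fix z assume "z \<in> space (\<mu> \<Otimes>\<^sub>M \<mu>)"
    then have "fst z \<in> M" "snd z \<in> M" by (auto simp: space_pair_measure space_eq)
    then show "(\<lambda>n. Min ((\<lambda>s. d (fst z) s + d s (snd z)) ` N n)) \<longlonglongrightarrow> d (fst z) (snd z)"
      by (rule tendsto_Min_dist_net[OF N])
  qed
qed

end

lemma compact_pmm_spaceI: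
  assumes "pmm_space M d \<mu>" "pmm_compact M d" "fully_supported M d \<mu>"
  shows "compact_pmm_space M d \<mu>"
  using assms
  by (auto simp: compact_pmm_space_def compact_pmm_space_axioms_def metric_borel_prob_def
      metric_borel_prob_axioms_def pmm_space_def pmm_compact_def)

section \<open>Admissible plans between compact pmm-spaces\<close>

lemma measure_le_if_dominated:
  assumes \<nu>: "prob_space \<nu>" and \<mu>: "prob_space \<mu>" and sets: "sets \<nu> = sets \<mu>" and \<epsilon>: "0 \<le> \<epsilon>"
    and dom: "\<And>A. A \<in> sets \<mu> \<Longrightarrow> emeasure \<nu> A \<le> ennreal (1 + \<epsilon>) * emeasure \<mu> A"
    and A: "A \<in> sets \<mu>"
  shows "measure \<nu> A \<le> measure \<mu> A + \<epsilon>"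
proof -
  interpret N: prob_space \<nu> by fact
  interpret P: prob_space \<mu> by fact
  have "emeasure \<nu> A \<le> ennreal (1 + \<epsilon>) * emeasure \<mu> A" by (rule dom[OF A])
  also have "\<dots> = ennreal ((1 + \<epsilon>) * measure \<mu> A)"
    using \<epsilon> by (simp add: P.emeasure_eq_measure ennreal_mult)
  finally have "measure \<nu> A \<le> (1 + \<epsilon>) * measure \<mu> A"
    using \<epsilon> by (simp add: N.emeasure_eq_measure)
  also have "\<dots> \<le> measure \<mu> A + \<epsilon>"
    using \<epsilon> P.prob_le_1[of A] by (simp add: algebra_simps mult_left_le)
  finally show ?thesis .
qed

lemma measure_ge_if_dominated:
  assumes \<nu>: "prob_space \<nu>" and \<mu>: "prob_space \<mu>" and sets: "sets \<nu> = sets \<mu>" and \<epsilon>: "0 \<le> \<epsilon>"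
    and dom: "\<And>A. A \<in> sets \<mu> \<Longrightarrow> emeasure \<nu> A \<le> ennreal (1 + \<epsilon>) * emeasure \<mu> A"
    and A: "A \<in> sets \<mu>"
  shows "measure \<mu> A - \<epsilon> \<le> measure \<nu> A"
proof -
  interpret N: prob_space \<nu> by fact
  interpret P: prob_space \<mu> by fact
  have space: "space \<nu> = space \<mu>" by (rule sets_eq_imp_space_eq[OF sets])
  have "measure \<nu> (space \<mu> - A) \<le> measure \<mu> (space \<mu> - A) + \<epsilon>"
    using A by (intro measure_le_if_dominated[OF \<nu> \<mu> sets \<epsilon> dom]) auto
  then show ?thesis
    using A N.prob_compl[of A] P.prob_compl[of A] by (simp add: space sets)
qed

lemma distr_pair_snd:
  assumes M: "prob_space M" and N: "sigma_finite_measure N"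
  shows "distr (M \<Otimes>\<^sub>M N) N snd = N"
proof -
  interpret P: prob_space M by (rule M)
  interpret S: sigma_finite_measure N by (rule N)
  show ?thesis
  proof (rule measure_eqI)
    fix B assume "B \<in> sets (distr (M \<Otimes>\<^sub>M N) N snd)"
    then have B: "B \<in> sets N" by simp
    have "snd -` B \<inter> space (M \<Otimes>\<^sub>M N) = space M \<times> B"
      using sets.sets_into_space[OF B] by (auto simp: space_pair_measure)
    then show "emeasure (distr (M \<Otimes>\<^sub>M N) N snd) B = emeasure N B"
      using B by (simp add: emeasure_distr S.emeasure_pair_measure_Times P.emeasure_space_1)
  qed simp
qed

lemma (in finite_measure) exists_large_piece:
  assumes N: "finite N" and cover: "S \<subseteq> (\<Union>u\<in>N. T u)" and T: "\<And>u. u \<in> N \<Longrightarrow> T u \<in> sets M"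
    and large: "real (card N) * c < measure M S"
  shows "\<exists>u\<in>N. c \<le> measure M (T u)"
proof (rule ccontr)
  assume "\<not> ?thesis"
  then have small: "\<And>u. u \<in> N \<Longrightarrow> measure M (T u) \<le> c" by force
  have "measure M S \<le> measure M (\<Union>u\<in>N. T u)"
    using cover N T by (intro finite_measure_mono) auto
  also have "\<dots> \<le> (\<Sum>u\<in>N. measure M (T u))"
    using N T by (intro finite_measure_subadditive_finite) auto
  also have "\<dots> \<le> real (card N) * c"
    using sum_bounded_above[of N "\<lambda>u. measure M (T u)" c] small by simp
  finally show False using large by simp
qed

locale pmm_pair = MX: compact_pmm_space X dX \<mu>X + MY: compact_pmm_space Y dY \<mu>Y
  for X :: "'a set" and dX and \<mu>X and Y :: "'b set" and dY and \<mu>Y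
begin

lemma space_pair: "space (\<mu>X \<Otimes>\<^sub>M \<mu>Y) = X \<times> Y"
  by (simp add: space_pair_measure MX.space_eq MY.space_eq)

lemma measure_plan_fst:
  assumes sets: "sets \<pi> = sets (\<mu>X \<Otimes>\<^sub>M \<mu>Y)" and A: "A \<in> sets \<mu>X"
  shows "measure (distr \<pi> \<mu>X fst) A = measure \<pi> (A \<times> Y)"
proof -
  have "fst -` A \<inter> space \<pi> = A \<times> Y"
    using sets.sets_into_space[OF A] sets_eq_imp_space_eq[OF sets] by (auto simp: space_pair MX.space_eq)
  then show ?thesis
    using measure_distr[of fst \<pi> \<mu>X A] A by (simp add: measurable_cong_sets[OF sets refl])
qed

lemma measure_plan_snd:
  assumes sets: "sets \<pi> = sets (\<mu>X \<Otimes>\<^sub>M \<mu>Y)" and B: "B \<in> sets \<mu>Y"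
  shows "measure (distr \<pi> \<mu>Y snd) B = measure \<pi> (X \<times> B)"
proof -
  have "snd -` B \<inter> space \<pi> = X \<times> B"
    using sets.sets_into_space[OF B] sets_eq_imp_space_eq[OF sets] by (auto simp: space_pair MY.space_eq)
  then show ?thesis
    using measure_distr[of snd \<pi> \<mu>Y B] B by (simp add: measurable_cong_sets[OF sets refl])
qed

context
  fixes \<pi> \<epsilon>
  assumes adm: "pgw_admissible \<mu>X \<mu>Y \<epsilon> \<pi>" and \<epsilon>: "0 \<le> \<epsilon>"
begin

lemma plan_prob: "prob_space \<pi>" and plan_sets: "sets \<pi> = sets (\<mu>X \<Otimes>\<^sub>M \<mu>Y)"
  using adm by (auto simp: pgw_admissible_def)

lemma measure_plan_fst_bounds:
  assumes A: "A \<in> sets \<mu>X"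
  shows "measure \<mu>X A - \<epsilon> \<le> measure \<pi> (A \<times> Y)" "measure \<pi> (A \<times> Y) \<le> measure \<mu>X A + \<epsilon>"
proof -
  have \<nu>: "prob_space (distr \<pi> \<mu>X fst)"
    by (intro prob_space.prob_space_distr plan_prob) (simp add: measurable_cong_sets[OF plan_sets refl])
  have dom: "\<And>A. A \<in> sets \<mu>X \<Longrightarrow> emeasure (distr \<pi> \<mu>X fst) A \<le> ennreal (1 + \<epsilon>) * emeasure \<mu>X A"
    using adm by (simp add: pgw_admissible_def)
  show "measure \<mu>X A - \<epsilon> \<le> measure \<pi> (A \<times> Y)" "measure \<pi> (A \<times> Y) \<le> measure \<mu>X A + \<epsilon>"
    using measure_ge_if_dominated[OF \<nu> MX.prob _ \<epsilon> dom A] measure_le_if_dominated[OF \<nu> MX.prob _ \<epsilon> dom A]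
    by (simp_all add: measure_plan_fst[OF plan_sets A])
qed

lemma measure_plan_snd_bounds:
  assumes B: "B \<in> sets \<mu>Y"
  shows "measure \<mu>Y B - \<epsilon> \<le> measure \<pi> (X \<times> B)" "measure \<pi> (X \<times> B) \<le> measure \<mu>Y B + \<epsilon>"
proof -
  have \<nu>: "prob_space (distr \<pi> \<mu>Y snd)"
    by (intro prob_space.prob_space_distr plan_prob) (simp add: measurable_cong_sets[OF plan_sets refl])
  have dom: "\<And>A. A \<in> sets \<mu>Y \<Longrightarrow> emeasure (distr \<pi> \<mu>Y snd) A \<le> ennreal (1 + \<epsilon>) * emeasure \<mu>Y A"
    using adm by (simp add: pgw_admissible_def)
  show "measure \<mu>Y B - \<epsilon> \<le> measure \<pi> (X \<times> B)" "measure \<pi> (X \<times> B) \<le> measure \<mu>Y B + \<epsilon>"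
    using measure_ge_if_dominated[OF \<nu> MY.prob _ \<epsilon> dom B] measure_le_if_dominated[OF \<nu> MY.prob _ \<epsilon> dom B]
    by (simp_all add: measure_plan_snd[OF plan_sets B])
qed

end

lemma borel_measurable_dist_gap:
  assumes sets: "sets \<pi> = sets (\<mu>X \<Otimes>\<^sub>M \<mu>Y)"
  shows "dist_gap dX dY \<in> borel_measurable (\<pi> \<Otimes>\<^sub>M \<pi>)"
proof -
  let ?R = "(\<mu>X \<Otimes>\<^sub>M \<mu>Y) \<Otimes>\<^sub>M (\<mu>X \<Otimes>\<^sub>M \<mu>Y)"
  have PX: "(\<lambda>z. (fst (fst z), fst (snd z))) \<in> measurable ?R (\<mu>X \<Otimes>\<^sub>M \<mu>X)"
    and PY: "(\<lambda>z. (snd (fst z), snd (snd z))) \<in> measurable ?R (\<mu>Y \<Otimes>\<^sub>M \<mu>Y)"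
    by measurable
  have "(\<lambda>z. dX (fst (fst z)) (fst (snd z))) \<in> borel_measurable ?R"
    "(\<lambda>z. dY (snd (fst z)) (snd (snd z))) \<in> borel_measurable ?R"
    using measurable_compose[OF PX MX.borel_measurable_dist] measurable_compose[OF PY MY.borel_measurable_dist]
    by (simp_all add: o_def)
  then have "dist_gap dX dY \<in> borel_measurable ?R"
    unfolding dist_gap_def case_prod_beta by measurable
  then show ?thesis
    by (simp add: measurable_cong_sets[OF sets_pair_measure_cong[OF sets sets] refl])
qed

lemma pgw_admissible_if_marginals:
  assumes "prob_space \<pi>" "sets \<pi> = sets (\<mu>X \<Otimes>\<^sub>M \<mu>Y)"
    and "distr \<pi> \<mu>X fst = \<mu>X" "distr \<pi> \<mu>Y snd = \<mu>Y" and "0 \<le> \<epsilon>"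
  shows "pgw_admissible \<mu>X \<mu>Y \<epsilon> \<pi>"
proof -
  have "x \<le> ennreal (1 + \<epsilon>) * x" for x :: ennreal
    using mult_right_mono[of 1 "ennreal (1 + \<epsilon>)" x] assms(5) by simp
  then show ?thesis using assms by (simp add: pgw_admissible_def)
qed

lemma PGW_eps_0_if_isomorphic:
  assumes iso: "pmm_isomorphic X dX \<mu>X Y dY \<mu>Y" and p: "1 \<le> p"
  shows "PGW_eps dX \<mu>X dY \<mu>Y 0 p = 0"
proof -
  obtain f where bij: "bij_betw f X Y" and isom: "\<And>x x'. x \<in> X \<Longrightarrow> x' \<in> X \<Longrightarrow> dY (f x) (f x') = dX x x'"
    and f: "f \<in> measurable \<mu>X \<mu>Y" and f_distr: "distr \<mu>X \<mu>Y f = \<mu>Y"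
    using iso unfolding pmm_isomorphic_def by blast
  define h where "h x = (x, f x)" for x
  have h: "h \<in> measurable \<mu>X (\<mu>X \<Otimes>\<^sub>M \<mu>Y)"
    unfolding h_def using f by measurable
  define \<pi> where "\<pi> = distr \<mu>X (\<mu>X \<Otimes>\<^sub>M \<mu>Y) h"
  have \<pi>: "prob_space \<pi>" unfolding \<pi>_def by (rule MX.P.prob_space_distr[OF h])
  have sets: "sets \<pi> = sets (\<mu>X \<Otimes>\<^sub>M \<mu>Y)" by (simp add: \<pi>_def)
  have "distr \<pi> \<mu>X fst = \<mu>X" "distr \<pi> \<mu>Y snd = \<mu>Y"
    using f_distr by (simp_all add: \<pi>_def distr_distr[OF _ h] o_def h_def)
  then have adm: "pgw_admissible \<mu>X \<mu>Y 0 \<pi>"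
    using \<pi> sets by (intro pgw_admissible_if_marginals) auto
  have gap: "dist_gap dX dY \<in> borel_measurable (\<pi> \<Otimes>\<^sub>M \<pi>)"
    by (rule borel_measurable_dist_gap[OF sets])
  let ?R = "(\<mu>X \<Otimes>\<^sub>M \<mu>Y) \<Otimes>\<^sub>M (\<mu>X \<Otimes>\<^sub>M \<mu>Y)"
  have hh: "(\<lambda>(x, x'). (h x, h x')) \<in> measurable (\<mu>X \<Otimes>\<^sub>M \<mu>X) ?R"
    using h by measurable
  have "dist_gap dX dY \<in> borel_measurable ?R" by (rule borel_measurable_dist_gap) simp
  then have G: "{z \<in> space ?R. dist_gap dX dY z \<le> 0} \<in> sets ?R" by measurable
  have pair_eq: "\<pi> \<Otimes>\<^sub>M \<pi> = distr (\<mu>X \<Otimes>\<^sub>M \<mu>X) ?R (\<lambda>(x, x'). (h x, h x'))"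
    unfolding \<pi>_def using \<pi> by (intro pair_measure_distr h) (simp add: \<pi>_def prob_space_imp_sigma_finite)
  have "AE z in distr (\<mu>X \<Otimes>\<^sub>M \<mu>X) ?R (\<lambda>(x, x'). (h x, h x')). dist_gap dX dY z \<le> 0"
    unfolding AE_distr_iff[OF hh G] using bij isom
    by (intro AE_I2) (auto simp: space_pair_measure MX.space_eq h_def)
  then have "AE z in \<pi> \<Otimes>\<^sub>M \<pi>. dist_gap dX dY z \<le> 0" unfolding pair_eq .
  then have "lp_distortion dX dY p \<pi> \<le> 0"
    using lp_distortion_le_AE_bound[OF \<pi> p order_refl gap] by simp
  moreover have "PGW_eps dX \<mu>X dY \<mu>Y 0 p \<le> lp_distortion dX dY p \<pi>"
    unfolding PGW_eps_def using adm by (intro Inf_lower) blast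
  ultimately show ?thesis by simp
qed

text \<open>The product plan is admissible for every \<open>\<epsilon>\<close>, which bounds \<open>PGW_eps\<close> by the diameters.\<close>
lemma PGW_eps_bounded:
  assumes p: "1 \<le> p"
  shows "\<exists>D\<ge>0. \<forall>\<epsilon>\<ge>0. PGW_eps dX \<mu>X dY \<mu>Y \<epsilon> p \<le> ennreal D"
proof -
  obtain DX where DX: "0 \<le> DX" "\<And>x x'. x \<in> X \<Longrightarrow> x' \<in> X \<Longrightarrow> dX x x' \<le> DX"
    using MX.diameter_bounded[OF MX.compact] by blast
  obtain DY where DY: "0 \<le> DY" "\<And>y y'. y \<in> Y \<Longrightarrow> y' \<in> Y \<Longrightarrow> dY y y' \<le> DY"
    using MY.diameter_bounded[OF MY.compact] by blast
  let ?\<pi> = "\<mu>X \<Otimes>\<^sub>M \<mu>Y"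
  have \<pi>: "prob_space ?\<pi>" by (rule prob_space_pair[OF MX.prob MY.prob])
  have "distr ?\<pi> \<mu>Y snd = \<mu>Y"
    using MX.prob prob_space_imp_sigma_finite[OF MY.prob] by (rule distr_pair_snd)
  then have adm: "pgw_admissible \<mu>X \<mu>Y \<epsilon> ?\<pi>" if "0 \<le> \<epsilon>" for \<epsilon>
    using that \<pi> MY.P.distr_pair_fst by (intro pgw_admissible_if_marginals) auto
  have "AE z in ?\<pi> \<Otimes>\<^sub>M ?\<pi>. dist_gap dX dY z \<le> DX + DY"
  proof (rule AE_I2)
    fix z assume "z \<in> space (?\<pi> \<Otimes>\<^sub>M ?\<pi>)"
    then obtain x y x' y' where z: "z = ((x, y), (x', y'))" "x \<in> X" "x' \<in> X" "y \<in> Y" "y' \<in> Y"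
      by (auto simp: space_pair_measure MX.space_eq MY.space_eq)
    have "\<bar>dX x x' - dY y y'\<bar> \<le> DX + DY"
      using DX(2)[of x x'] DY(2)[of y y'] MX.nonneg[of x x'] MY.nonneg[of y y'] z
      unfolding abs_le_iff by linarith
    then show "dist_gap dX dY z \<le> DX + DY" using z(1) by simp
  qed
  then have "lp_distortion dX dY p ?\<pi> \<le> ennreal (DX + DY)"
    using DX DY by (intro lp_distortion_le_AE_bound[OF \<pi> p] borel_measurable_dist_gap) auto
  then have "PGW_eps dX \<mu>X dY \<mu>Y \<epsilon> p \<le> ennreal (DX + DY)" if "0 \<le> \<epsilon>" for \<epsilon>
    unfolding PGW_eps_def using adm[OF that] by (blast intro: Inf_lower2)
  then show ?thesis using DX DY by (intro exI[of _ "DX + DY"]) auto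
qed

lemma PGW_robust_eq_0_if_isomorphic:
  assumes "pmm_isomorphic X dX \<mu>X Y dY \<mu>Y" and "1 \<le> p"
  shows "PGW_robust dX \<mu>X dY \<mu>Y k p = 0"
  unfolding PGW_robust_def
  using PGW_eps_0_if_isomorphic[OF assms]
  by (intro cInf_eq_minimum) (auto intro!: exI[of _ 0])

lemma small_plans_if_PGW_robust_eq_0:
  assumes k: "0 < k" and p: "1 \<le> p" and R: "PGW_robust dX \<mu>X dY \<mu>Y k p = 0" and t: "0 < t"
  shows "\<exists>\<epsilon> \<pi>. 0 \<le> \<epsilon> \<and> \<epsilon> \<le> t \<and> pgw_admissible \<mu>X \<mu>Y \<epsilon> \<pi> \<and> lp_distortion dX dY p \<pi> \<le> ennreal t"
proof -
  define S where "S = {\<epsilon> / (1 + \<epsilon>) | \<epsilon>. \<epsilon> \<ge> 0 \<and> PGW_eps dX \<mu>X dY \<mu>Y \<epsilon> p \<le> ennreal (k * \<epsilon>)}"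
  obtain D where D: "0 \<le> D" "\<And>\<epsilon>. 0 \<le> \<epsilon> \<Longrightarrow> PGW_eps dX \<mu>X dY \<mu>Y \<epsilon> p \<le> ennreal D"
    using PGW_eps_bounded[OF p] by blast
  then have "D / k / (1 + D / k) \<in> S"
    using k by (auto simp: S_def intro!: exI[of _ "D / k"])
  then have S: "S \<noteq> {}" by blast
  define u where "u = min (1/2) (t / (2 * k + 2))"
  have u: "0 < u" "u \<le> 1/2"
    using t k unfolding u_def by (simp_all only: min.cobounded1) simp
  have "(2 * k + 2) * u \<le> (2 * k + 2) * (t / (2 * k + 2))"
    using k by (intro mult_left_mono) (auto simp: u_def)
  then have ut: "(2 * k + 2) * u \<le> t" using k by simp
  have "Inf S < u" using R u by (simp add: PGW_robust_def S_def)
  then obtain \<epsilon> where \<epsilon>: "0 \<le> \<epsilon>" "PGW_eps dX \<mu>X dY \<mu>Y \<epsilon> p \<le> ennreal (k * \<epsilon>)" "\<epsilon> / (1 + \<epsilon>) < u"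
    using cInf_less_iff[OF S, of u] by (force simp: S_def intro: bdd_belowI[of _ 0])
  have "\<epsilon> < u * (1 + \<epsilon>)" using \<epsilon> by (simp add: pos_divide_less_eq)
  moreover have "u * \<epsilon> \<le> 1/2 * \<epsilon>" using u(2) \<epsilon>(1) by (rule mult_right_mono)
  ultimately have \<epsilon>_u: "\<epsilon> < 2 * u" by (simp add: algebra_simps)
  have "PGW_eps dX \<mu>X dY \<mu>Y \<epsilon> p < ennreal (k * \<epsilon> + u)"
    using \<epsilon>(2) u(1) k \<epsilon>(1) by (elim order.strict_trans1) (simp add: ennreal_lessI)
  then obtain \<pi> where adm: "pgw_admissible \<mu>X \<mu>Y \<epsilon> \<pi>" and less: "lp_distortion dX dY p \<pi> < ennreal (k * \<epsilon> + u)"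
    unfolding PGW_eps_def Inf_less_iff by blast
  have "k * \<epsilon> < k * (2 * u)" by (rule mult_strict_left_mono[OF \<epsilon>_u k])
  moreover have "0 \<le> k * u" using k u(1) by simp
  moreover have "2 * (k * u) + 2 * u \<le> t" using ut by (simp add: algebra_simps)
  ultimately have "k * \<epsilon> + u \<le> t" "\<epsilon> \<le> t" using \<epsilon>_u u(1) by linarith+
  with less adm \<epsilon>(1) show ?thesis
    by (intro exI[of _ \<epsilon>] exI[of _ \<pi>]) (auto intro: order.trans[OF less_imp_le ennreal_leI])
qed

definition coupled :: "('a \<times> 'b) measure \<Rightarrow> real \<Rightarrow> real \<Rightarrow> 'a \<Rightarrow> 'b \<Rightarrow> bool" where
  "coupled \<pi> r c x y \<longleftrightarrow> x \<in> X \<and> y \<in> Y \<and> c \<le> measure \<pi> (MX.mball x r \<times> MY.mball y r)"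

text \<open>In Gromov--Hausdorff terms, \<open>coupled \<pi> r c\<close> is a correspondence of distortion at most \<open>5 r\<close>.\<close>
definition correspondence_plan ::
    "real \<Rightarrow> real \<Rightarrow> ('a \<times> 'b) measure \<Rightarrow> real \<Rightarrow> ('a \<times> 'b) set \<Rightarrow> bool" where
  "correspondence_plan r \<epsilon> \<pi> c E \<longleftrightarrow>
     pgw_admissible \<mu>X \<mu>Y \<epsilon> \<pi> \<and> 0 \<le> \<epsilon> \<and> \<epsilon> \<le> r
     \<and> (\<forall>x\<in>X. \<exists>y. coupled \<pi> r c x y) \<and> (\<forall>y\<in>Y. \<exists>x. coupled \<pi> r c x y)
     \<and> (\<forall>x x' y y'. coupled \<pi> r c x y \<longrightarrow> coupled \<pi> r c x' y' \<longrightarrow> \<bar>dX x x' - dY y y'\<bar> \<le> 5 * r)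
     \<and> E \<in> sets \<pi> \<and> measure \<pi> E \<le> r \<and> (\<forall>x\<in>X. \<forall>y\<in>Y. (x, y) \<notin> E \<longrightarrow> coupled \<pi> r c x y)"

lemma correspondence_planD:
  assumes "correspondence_plan r \<epsilon> \<pi> c E"
  shows "pgw_admissible \<mu>X \<mu>Y \<epsilon> \<pi>" "0 \<le> \<epsilon>" "\<epsilon> \<le> r"
    and "x \<in> X \<Longrightarrow> \<exists>y. coupled \<pi> r c x y" "y \<in> Y \<Longrightarrow> \<exists>x. coupled \<pi> r c x y"
    and "coupled \<pi> r c x y \<Longrightarrow> coupled \<pi> r c x' y' \<Longrightarrow> \<bar>dX x x' - dY y y'\<bar> \<le> 5 * r"
    and "E \<in> sets \<pi>" "measure \<pi> E \<le> r"
    and "x \<in> X \<Longrightarrow> y \<in> Y \<Longrightarrow> (x, y) \<notin> E \<Longrightarrow> coupled \<pi> r c x y"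
  using assms unfolding correspondence_plan_def by blast+

lemma coupled_dist_gap_le:
  assumes adm: "pgw_admissible \<mu>X \<mu>Y \<epsilon> \<pi>" and p: "1 \<le> p"
    and L: "lp_distortion dX dY p \<pi> \<le> ennreal L" "0 \<le> L" and c: "0 < c"
    and xy: "coupled \<pi> r c x y" and xy': "coupled \<pi> r c x' y'"
  shows "\<bar>dX x x' - dY y y'\<bar> \<le> 4 * r + L / c\<^sup>2"
proof -
  have \<pi>: "prob_space \<pi>" and sets: "sets \<pi> = sets (\<mu>X \<Otimes>\<^sub>M \<mu>Y)"
    using adm by (auto simp: pgw_admissible_def)
  interpret PI: prob_space \<pi> by (rule \<pi>)
  define R where "R = MX.mball x r \<times> MY.mball y r"
  define R' where "R' = MX.mball x' r \<times> MY.mball y' r"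
  define a where "a = max 0 (\<bar>dX x x' - dY y y'\<bar> - 4 * r)"
  have RR: "R \<times> R' \<in> sets (\<pi> \<Otimes>\<^sub>M \<pi>)" by (simp add: R_def R'_def sets)
  have a: "0 \<le> a" by (simp add: a_def)
  have gap: "a \<le> dist_gap dX dY z" if "z \<in> R \<times> R'" for z
  proof -
    obtain u v u' v' where z: "z = ((u, v), (u', v'))" by (metis prod.collapse)
    with that have uv: "(u, v) \<in> R" "(u', v') \<in> R'" by auto
    then have "\<bar>dX x x' - dX u u'\<bar> \<le> dX x u + dX x' u'" "\<bar>dY y y' - dY v v'\<bar> \<le> dY y v + dY y' v'"
      by (auto simp: R_def R'_def intro!: MX.dist_diff_le MY.dist_diff_le)
    then show ?thesis using uv z dist_gap_nonneg[of dX dY z] by (auto simp: a_def R_def R'_def)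
  qed
  have "ennreal (a * measure (\<pi> \<Otimes>\<^sub>M \<pi>) (R \<times> R')) \<le> ennreal L"
    using lp_distortion_ge_measure[OF \<pi> p RR a gap] L(1) by (rule order_trans)
  then have "a * (measure \<pi> R * measure \<pi> R') \<le> L"
    using PI.emeasure_pair_measure_Times[of R \<pi> R'] L(2)
    by (simp add: R_def R'_def sets measure_def enn2real_mult)
  moreover have "a * (c * c) \<le> a * (measure \<pi> R * measure \<pi> R')"
    using xy xy' c a by (intro mult_left_mono mult_mono) (auto simp: coupled_def R_def R'_def)
  ultimately have "a * (c * c) \<le> L" by linarith
  then have "a \<le> L / c\<^sup>2" using c by (simp add: pos_le_divide_eq power2_eq_square)
  then show ?thesis by (simp add: a_def)
qed

lemma coupled_partner_fst:
  assumes adm: "pgw_admissible \<mu>X \<mu>Y \<epsilon> \<pi>" and \<epsilon>: "0 \<le> \<epsilon>" and x: "x \<in> X"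
    and N: "finite N" "N \<subseteq> Y" "Y \<subseteq> (\<Union>u\<in>N. MY.mball u r)"
    and large: "real (card N) * c < measure \<mu>X (MX.mball x r) - \<epsilon>"
  shows "\<exists>y. coupled \<pi> r c x y"
proof -
  interpret PI: prob_space \<pi> by (rule plan_prob[OF adm \<epsilon>])
  have large': "real (card N) * c < measure \<pi> (MX.mball x r \<times> Y)"
    using large measure_plan_fst_bounds(1)[OF adm \<epsilon>, of "MX.mball x r"] by simp
  have cover: "MX.mball x r \<times> Y \<subseteq> (\<Union>u\<in>N. MX.mball x r \<times> MY.mball u r)"
    using N(3) by blast
  obtain u where "u \<in> N" "c \<le> measure \<pi> (MX.mball x r \<times> MY.mball u r)"
    using PI.exists_large_piece[OF N(1) cover _ large'] by (auto simp: plan_sets[OF adm \<epsilon>])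
  with x N(2) show ?thesis by (auto simp: coupled_def)
qed

lemma coupled_partner_snd:
  assumes adm: "pgw_admissible \<mu>X \<mu>Y \<epsilon> \<pi>" and \<epsilon>: "0 \<le> \<epsilon>" and y: "y \<in> Y"
    and N: "finite N" "N \<subseteq> X" "X \<subseteq> (\<Union>u\<in>N. MX.mball u r)"
    and large: "real (card N) * c < measure \<mu>Y (MY.mball y r) - \<epsilon>"
  shows "\<exists>x. coupled \<pi> r c x y"
proof -
  interpret PI: prob_space \<pi> by (rule plan_prob[OF adm \<epsilon>])
  have large': "real (card N) * c < measure \<pi> (X \<times> MY.mball y r)"
    using large measure_plan_snd_bounds(1)[OF adm \<epsilon>, of "MY.mball y r"] by simp
  have cover: "X \<times> MY.mball y r \<subseteq> (\<Union>u\<in>N. MX.mball u r \<times> MY.mball y r)"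
    using N(3) by blast
  obtain u where "u \<in> N" "c \<le> measure \<pi> (MX.mball u r \<times> MY.mball y r)"
    using PI.exists_large_piece[OF N(1) cover _ large'] by (auto simp: plan_sets[OF adm \<epsilon>])
  with y N(2) show ?thesis by (auto simp: coupled_def)
qed

text \<open>Cover \<open>X \<times> Y\<close> by products of \<open>r/2\<close>-balls around net points; the exceptional set is the union
  of those cells of \<open>\<pi>\<close>-measure below \<open>c\<close>.\<close>
lemma exists_exceptional_set:
  assumes \<pi>: "prob_space \<pi>" and sets: "sets \<pi> = sets (\<mu>X \<Otimes>\<^sub>M \<mu>Y)"
    and NX: "finite NX" "X \<subseteq> (\<Union>s\<in>NX. MX.mball s (r/2))"
    and NY: "finite NY" "Y \<subseteq> (\<Union>u\<in>NY. MY.mball u (r/2))" and c: "0 \<le> c"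
  shows "\<exists>E\<in>sets \<pi>. measure \<pi> E \<le> real (card NX * card NY) * c
           \<and> (\<forall>x\<in>X. \<forall>y\<in>Y. (x, y) \<notin> E \<longrightarrow> coupled \<pi> r c x y)"
proof -
  interpret PI: prob_space \<pi> by (rule \<pi>)
  define cell where "cell i = MX.mball (fst i) (r/2) \<times> MY.mball (snd i) (r/2)" for i
  define I where "I = {i \<in> NX \<times> NY. measure \<pi> (cell i) < c}"
  define E where "E = (\<Union>i\<in>I. cell i)"
  have I: "finite I" "I \<subseteq> NX \<times> NY" using NX(1) NY(1) by (auto simp: I_def)
  have cell: "cell i \<in> sets \<pi>" for i by (simp add: cell_def sets)
  have "E \<in> sets \<pi>" unfolding E_def using I(1) cell by blast
  moreover have "measure \<pi> E \<le> real (card NX * card NY) * c"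
  proof -
    have "measure \<pi> E \<le> (\<Sum>i\<in>I. measure \<pi> (cell i))"
      unfolding E_def using I(1) cell by (intro PI.finite_measure_subadditive_finite) auto
    also have "\<dots> \<le> real (card I) * c"
      by (rule sum_bounded_above) (auto simp: I_def)
    also have "\<dots> \<le> real (card NX * card NY) * c"
    proof -
      have "card I \<le> card (NX \<times> NY)" using I NX(1) NY(1) by (intro card_mono) auto
      then show ?thesis
        using c by (intro mult_right_mono) (simp_all add: card_cartesian_product flip: of_nat_mult)
    qed
    finally show ?thesis .
  qed
  moreover have "coupled \<pi> r c x y" if xy: "x \<in> X" "y \<in> Y" "(x, y) \<notin> E" for x y
  proof -
    obtain s where s: "s \<in> NX" "x \<in> MX.mball s (r/2)" using NX(2) xy(1) by blast
    obtain u where u: "u \<in> NY" "y \<in> MY.mball u (r/2)" using NY(2) xy(2) by blast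
    have "(s, u) \<notin> I" using xy(3) s u by (auto simp: E_def cell_def)
    then have "c \<le> measure \<pi> (cell (s, u))" using s u by (auto simp: I_def)
    also have "\<dots> \<le> measure \<pi> (MX.mball x r \<times> MY.mball y r)"
    proof (rule PI.finite_measure_mono)
      have "MX.mball s (r/2) \<subseteq> MX.mball x r" using s xy(1) by (intro MX.mball_subset) auto
      moreover have "MY.mball u (r/2) \<subseteq> MY.mball y r" using u xy(2) by (intro MY.mball_subset) auto
      ultimately show "cell (s, u) \<subseteq> MX.mball x r \<times> MY.mball y r" by (auto simp: cell_def)
    qed (simp add: sets)
    finally show ?thesis using xy by (simp add: coupled_def)
  qed
  ultimately show ?thesis by blast
qed

lemma correspondence_planI:
  assumes adm: "pgw_admissible \<mu>X \<mu>Y \<epsilon> \<pi>" and \<epsilon>: "0 \<le> \<epsilon>" "\<epsilon> \<le> r" and p: "1 \<le> p"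
    and r: "0 < r" and c: "0 < c" and L: "lp_distortion dX dY p \<pi> \<le> ennreal (r * c\<^sup>2)"
    and NX: "finite NX" "NX \<subseteq> X" "X \<subseteq> (\<Union>s\<in>NX. MX.mball s (r/2))"
    and NY: "finite NY" "NY \<subseteq> Y" "Y \<subseteq> (\<Union>u\<in>NY. MY.mball u (r/2))"
    and large_X: "\<And>x. x \<in> X \<Longrightarrow> real (card NY) * c < measure \<mu>X (MX.mball x r) - \<epsilon>"
    and large_Y: "\<And>y. y \<in> Y \<Longrightarrow> real (card NX) * c < measure \<mu>Y (MY.mball y r) - \<epsilon>"
    and cells: "real (card NX * card NY) * c \<le> r"
  shows "\<exists>E. correspondence_plan r \<epsilon> \<pi> c E"
proof -
  have "(\<Union>s\<in>NX. MX.mball s (r/2)) \<subseteq> (\<Union>s\<in>NX. MX.mball s r)"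
    using r by (intro UN_mono MX.mball_subset_concentric) auto
  with NX(3) have cover_X: "X \<subseteq> (\<Union>s\<in>NX. MX.mball s r)" by (rule order_trans)
  have "(\<Union>u\<in>NY. MY.mball u (r/2)) \<subseteq> (\<Union>u\<in>NY. MY.mball u r)"
    using r by (intro UN_mono MY.mball_subset_concentric) auto
  with NY(3) have cover_Y: "Y \<subseteq> (\<Union>u\<in>NY. MY.mball u r)" by (rule order_trans)
  have "\<forall>x\<in>X. \<exists>y. coupled \<pi> r c x y"
    using coupled_partner_fst[OF adm \<epsilon>(1) _ NY(1,2) cover_Y large_X] by blast
  moreover have "\<forall>y\<in>Y. \<exists>x. coupled \<pi> r c x y"
    using coupled_partner_snd[OF adm \<epsilon>(1) _ NX(1,2) cover_X large_Y] by blast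
  moreover have "\<bar>dX x x' - dY y y'\<bar> \<le> 5 * r"
    if "coupled \<pi> r c x y" "coupled \<pi> r c x' y'" for x x' y y'
    using coupled_dist_gap_le[OF adm p L _ c that] r c by simp
  moreover obtain E where "E \<in> sets \<pi>" "measure \<pi> E \<le> real (card NX * card NY) * c"
    "\<forall>x\<in>X. \<forall>y\<in>Y. (x, y) \<notin> E \<longrightarrow> coupled \<pi> r c x y"
    using exists_exceptional_set[OF plan_prob[OF adm \<epsilon>(1)] plan_sets[OF adm \<epsilon>(1)] NX(1,3) NY(1,3)
        less_imp_le[OF c]]
    by blast
  ultimately show ?thesis
    using adm \<epsilon> cells unfolding correspondence_plan_def by (intro exI[of _ E]) auto
qed

lemma correspondence_plan_exists:
  assumes small: "\<And>t. 0 < t \<Longrightarrow> \<exists>\<epsilon> \<pi>. 0 \<le> \<epsilon> \<and> \<epsilon> \<le> t \<and> pgw_admissible \<mu>X \<mu>Y \<epsilon> \<pi>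
                                     \<and> lp_distortion dX dY p \<pi> \<le> ennreal t"
    and p: "1 \<le> p" and r: "0 < r" "r \<le> 1"
  shows "\<exists>\<epsilon> \<pi> c E. correspondence_plan r \<epsilon> \<pi> c E"
proof -
  have r2: "0 < r/2" using r by simp
  obtain NX where NX: "finite NX" "NX \<noteq> {}" "NX \<subseteq> X" "X \<subseteq> (\<Union>s\<in>NX. MX.mball s (r/2))"
    using MX.finite_mball_cover[OF r2] by blast
  obtain NY where NY: "finite NY" "NY \<noteq> {}" "NY \<subseteq> Y" "Y \<subseteq> (\<Union>u\<in>NY. MY.mball u (r/2))"
    using MY.finite_mball_cover[OF r2] by blast
  obtain \<rho>X where \<rho>X: "0 < \<rho>X" "\<And>x. x \<in> X \<Longrightarrow> \<rho>X \<le> measure \<mu>X (MX.mball x r)"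
    using MX.measure_mball_uniform_pos[OF r(1)] by blast
  obtain \<rho>Y where \<rho>Y: "0 < \<rho>Y" "\<And>y. y \<in> Y \<Longrightarrow> \<rho>Y \<le> measure \<mu>Y (MY.mball y r)"
    using MY.measure_mball_uniform_pos[OF r(1)] by blast
  define \<rho> where "\<rho> = min 1 (min \<rho>X \<rho>Y)"
  have \<rho>: "0 < \<rho>" "\<rho> \<le> 1" "\<rho> \<le> \<rho>X" "\<rho> \<le> \<rho>Y" using \<rho>X(1) \<rho>Y(1) by (auto simp: \<rho>_def)
  define n where "n = real (card NX) * real (card NY)"
  have card: "1 \<le> real (card NX)" "1 \<le> real (card NY)"
    using NX(1,2) NY(1,2) by (auto simp: Suc_le_eq card_gt_0_iff)
  then have n: "1 \<le> n" "real (card NX) \<le> n" "real (card NY) \<le> n"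
    using mult_left_mono[OF card(2), of "real (card NX)"] mult_right_mono[OF card(1), of "real (card NY)"]
    unfolding n_def by linarith+
  define c where "c = \<rho> * r / (2 * n)"
  have c: "0 < c" "n * c = \<rho> * r / 2" using \<rho> r n(1) by (simp_all add: c_def)
  have \<rho>r: "\<rho> * r \<le> \<rho>" "\<rho> * r \<le> r"
    using \<rho> r mult_left_mono[of r 1 \<rho>] mult_right_mono[of \<rho> 1 r] by simp_all
  define t where "t = min (\<rho> / 4) (r * c\<^sup>2)"
  have t: "0 < t" "t \<le> \<rho> / 4" "t \<le> r * c\<^sup>2" using \<rho> r c by (simp_all add: t_def)
  obtain \<epsilon> \<pi> where \<epsilon>: "0 \<le> \<epsilon>" "\<epsilon> \<le> t" and adm: "pgw_admissible \<mu>X \<mu>Y \<epsilon> \<pi>"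
    and L: "lp_distortion dX dY p \<pi> \<le> ennreal t"
    using small[OF t(1)] by blast
  have "\<rho> * r \<le> 2 * n" using \<rho>r(2) r(2) n(1) by linarith
  then have "c \<le> 1" using n(1) by (simp add: c_def pos_divide_le_eq)
  then have "c\<^sup>2 \<le> 1" using c(1) by (simp add: power_le_one)
  then have "r * c\<^sup>2 \<le> r" using mult_left_mono[of "c\<^sup>2" 1 r] r(1) by simp
  then have \<epsilon>_r: "\<epsilon> \<le> r" using \<epsilon>(2) t(3) by linarith
  have L': "lp_distortion dX dY p \<pi> \<le> ennreal (r * c\<^sup>2)"
    using L t(3) by (rule order_trans[OF _ ennreal_leI])
  have large: "n * c < \<rho> - \<epsilon>" using c(2) \<rho>r \<epsilon>(2) t(2) \<rho>(1) by linarith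
  have large_X: "real (card NY) * c < measure \<mu>X (MX.mball x r) - \<epsilon>" if "x \<in> X" for x
    using \<rho>X(2)[OF that] \<rho>(3) large mult_right_mono[OF n(3) less_imp_le[OF c(1)]] by linarith
  have large_Y: "real (card NX) * c < measure \<mu>Y (MY.mball y r) - \<epsilon>" if "y \<in> Y" for y
    using \<rho>Y(2)[OF that] \<rho>(4) large mult_right_mono[OF n(2) less_imp_le[OF c(1)]] by linarith
  have "real (card NX * card NY) * c = n * c" by (simp add: n_def)
  then have cells: "real (card NX * card NY) * c \<le> r" using c(2) \<rho>r(2) r(1) by linarith
  obtain E where "correspondence_plan r \<epsilon> \<pi> c E"
    using correspondence_planI[OF adm \<epsilon>(1) \<epsilon>_r p r(1) c(1) L' NX(1,3,4) NY(1,3,4) large_X large_Y cells]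
    by blast
  then show ?thesis by blast
qed

end

section \<open>The limit isometry\<close>

locale plan_sequence = pmm_pair X dX \<mu>X Y dY \<mu>Y
  for X :: "'a set" and dX and \<mu>X and Y :: "'b set" and dY and \<mu>Y +
  fixes r \<epsilon> :: "nat \<Rightarrow> real" and \<pi> :: "nat \<Rightarrow> ('a \<times> 'b) measure" and c :: "nat \<Rightarrow> real"
    and E :: "nat \<Rightarrow> ('a \<times> 'b) set" and U :: "nat filter"
  assumes plans: "\<And>n. correspondence_plan (r n) (\<epsilon> n) (\<pi> n) (c n) (E n)"
    and ultra: "ultrafilter U" and r_tendsto: "(r \<longlongrightarrow> 0) U"
begin

abbreviation coupled_at :: "nat \<Rightarrow> 'a \<Rightarrow> 'b \<Rightarrow> bool" where
  "coupled_at n \<equiv> coupled (\<pi> n) (r n) (c n)"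

lemma coupled_at_mem: "coupled_at n x y \<Longrightarrow> x \<in> X \<and> y \<in> Y"
  by (simp add: coupled_def)

lemma coupled_at_dist:
  "coupled_at n x y \<Longrightarrow> coupled_at n x' y' \<Longrightarrow> \<bar>dX x x' - dY y y'\<bar> \<le> 5 * r n"
  by (rule correspondence_planD(6)[OF plans])

lemma eventually_r_less: "0 < e \<Longrightarrow> eventually (\<lambda>n. r n < e) U"
  using order_tendstoD(2)[OF r_tendsto] .

lemma eventually_ex: "eventually P U \<Longrightarrow> \<exists>n. P n"
  using ultra eventually_happens'[of U P] by (simp add: ultrafilter_def)

definition partner :: "'a \<Rightarrow> nat \<Rightarrow> 'b" where
  "partner x n = (SOME y. coupled_at n x y)"

lemma coupled_partner: "x \<in> X \<Longrightarrow> coupled_at n x (partner x n)"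
  unfolding partner_def by (rule someI_ex) (rule correspondence_planD(4)[OF plans])

lemma partner_in: "x \<in> X \<Longrightarrow> partner x n \<in> Y"
  using coupled_partner coupled_at_mem by blast

definition limit_map :: "'a \<Rightarrow> 'b" where
  "limit_map x = (SOME l. limitin MY.mtopology (partner x) l U)"

lemma limitin_limit_map:
  assumes "x \<in> X"
  shows "limitin MY.mtopology (partner x) (limit_map x) U"
proof -
  have "\<exists>l. limitin MY.mtopology (partner x) l U"
    using MY.ultrafilter_limitin[OF MY.compact ultra partner_in[OF assms]] .
  then show ?thesis unfolding limit_map_def by (rule someI_ex)
qed

lemma limit_map_in: "x \<in> X \<Longrightarrow> limit_map x \<in> Y"
  using limitin_limit_map MY.limitin_mspace by blast

lemma eventually_dist_partner:
  assumes "x \<in> X" "0 < \<delta>"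
  shows "eventually (\<lambda>n. dY (partner x n) (limit_map x) < \<delta>) U"
proof -
  have "eventually (\<lambda>n. partner x n \<in> Y \<and> dY (partner x n) (limit_map x) < \<delta>) U"
    using limitin_limit_map[OF assms(1)] assms(2) unfolding MY.limitin_metric by blast
  then show ?thesis by (rule eventually_mono) simp
qed

lemma limit_map_isometric:
  assumes x: "x \<in> X" and x': "x' \<in> X"
  shows "dY (limit_map x) (limit_map x') = dX x x'"
proof -
  have "\<bar>dY (limit_map x) (limit_map x') - dX x x'\<bar> \<le> 0"
  proof (rule field_le_epsilon)
    fix e :: real assume e: "0 < e"
    have "eventually (\<lambda>n. dY (partner x n) (limit_map x) < e/3 \<and> dY (partner x' n) (limit_map x') < e/3
        \<and> r n < e/15) U"
      using e x x' by (intro eventually_conj eventually_dist_partner eventually_r_less) auto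
    then obtain n where n: "dY (partner x n) (limit_map x) < e/3"
      "dY (partner x' n) (limit_map x') < e/3" "r n < e/15"
      using eventually_ex by blast
    have "\<bar>dX x x' - dY (partner x n) (partner x' n)\<bar> \<le> 5 * r n"
      using x x' by (intro coupled_at_dist coupled_partner)
    moreover have "\<bar>dY (limit_map x) (limit_map x') - dY (partner x n) (partner x' n)\<bar>
        \<le> dY (partner x n) (limit_map x) + dY (partner x' n) (limit_map x')"
      using x x' MY.dist_diff_le[of "limit_map x" "limit_map x'" "partner x n" "partner x' n"]
      by (simp add: limit_map_in partner_in MY.commute)
    ultimately show "\<bar>dY (limit_map x) (limit_map x') - dX x x'\<bar> \<le> 0 + e"
      using n unfolding abs_le_iff by linarith
  qed
  then show ?thesis by simp
qed

lemma limit_map_surj: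
  assumes y: "y \<in> Y"
  shows "\<exists>x\<in>X. limit_map x = y"
proof -
  define q where "q n = (SOME x. coupled_at n x y)" for n
  have q: "coupled_at n (q n) y" for n
    unfolding q_def by (rule someI_ex) (rule correspondence_planD(5)[OF plans y])
  obtain x where "limitin MX.mtopology q x U"
    using MX.ultrafilter_limitin[OF MX.compact ultra] q coupled_at_mem by blast
  then have x: "x \<in> X" and q_lim: "\<And>\<delta>. 0 < \<delta> \<Longrightarrow> eventually (\<lambda>n. dX (q n) x < \<delta>) U"
    unfolding MX.limitin_metric by (auto elim: eventually_mono)
  have "dY (limit_map x) y \<le> 0"
  proof (rule field_le_epsilon)
    fix e :: real assume e: "0 < e"
    have "eventually (\<lambda>n. dX (q n) x < e/3 \<and> dY (partner x n) (limit_map x) < e/3 \<and> r n < e/15) U"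
      using e x by (intro eventually_conj q_lim eventually_dist_partner eventually_r_less) auto
    then obtain n where n: "dX (q n) x < e/3" "dY (partner x n) (limit_map x) < e/3" "r n < e/15"
      using eventually_ex by blast
    have "\<bar>dX x (q n) - dY (partner x n) y\<bar> \<le> 5 * r n"
      using x q by (intro coupled_at_dist coupled_partner)
    moreover have "dY (limit_map x) y \<le> dY (partner x n) (limit_map x) + dY (partner x n) y"
      using x y MY.triangle[of "limit_map x" "partner x n" y]
      by (simp add: limit_map_in partner_in MY.commute)
    moreover have "dX x (q n) = dX (q n) x" by (rule MX.commute)
    ultimately show "dY (limit_map x) y \<le> 0 + e" using n unfolding abs_le_iff by linarith
  qed
  then have "dY (limit_map x) y = 0" using MY.nonneg[of "limit_map x" y] by linarith
  then show ?thesis using x y limit_map_in MY.zero by blast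
qed

lemma limit_map_bij: "bij_betw limit_map X Y"
proof -
  have "inj_on limit_map X"
  proof (rule inj_onI)
    fix x x' assume "x \<in> X" "x' \<in> X" "limit_map x = limit_map x'"
    then have "dX x x' = 0" using limit_map_isometric[of x x'] limit_map_in[of x'] by simp
    with \<open>x \<in> X\<close> \<open>x' \<in> X\<close> show "x = x'" using MX.zero by blast
  qed
  moreover have "limit_map ` X = Y" using limit_map_in limit_map_surj by blast
  ultimately show ?thesis by (simp add: bij_betw_def)
qed

lemma openin_preimage_limit_map:
  assumes V: "openin MY.mtopology V"
  shows "openin MX.mtopology {x\<in>X. limit_map x \<in> V}"
  unfolding MX.openin_mtopology
proof (intro conjI allI impI)
  fix x assume x: "x \<in> {x\<in>X. limit_map x \<in> V}"
  then obtain e where "e > 0" "MY.mball (limit_map x) e \<subseteq> V"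
    using V unfolding MY.openin_mtopology by blast
  moreover have "limit_map ` MX.mball x e \<subseteq> MY.mball (limit_map x) e"
    using x by (auto simp: limit_map_isometric limit_map_in)
  ultimately have "MX.mball x e \<subseteq> {x\<in>X. limit_map x \<in> V}" by auto
  with \<open>e > 0\<close> show "\<exists>e>0. MX.mball x e \<subseteq> {x\<in>X. limit_map x \<in> V}" by blast
qed auto

lemma closedin_preimage_limit_map:
  assumes K: "closedin MY.mtopology K"
  shows "closedin MX.mtopology {x\<in>X. limit_map x \<in> K}"
proof -
  have "openin MX.mtopology {x\<in>X. limit_map x \<in> Y - K}"
    using K by (intro openin_preimage_limit_map) (simp add: closedin_def)
  moreover have "{x\<in>X. limit_map x \<in> Y - K} = X - {x\<in>X. limit_map x \<in> K}"
    using limit_map_in by auto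
  ultimately show ?thesis by (auto simp: closedin_def)
qed

lemma limit_map_measurable: "limit_map \<in> measurable \<mu>X \<mu>Y"
proof (rule measurable_sigma_sets)
  show "sets \<mu>Y = sigma_sets Y {U. openin MY.mtopology U}"
    by (simp add: MY.sets_eq borel_sets_of_def)
  show "{U. openin MY.mtopology U} \<subseteq> Pow Y" using openin_subset by fastforce
  show "limit_map \<in> space \<mu>X \<rightarrow> Y" by (simp add: MX.space_eq limit_map_in)
next
  fix V assume "V \<in> {U. openin MY.mtopology U}"
  then have "{x\<in>X. limit_map x \<in> V} \<in> sets \<mu>X"
    by (intro MX.openin_sets openin_preimage_limit_map) simp
  moreover have "limit_map -` V \<inter> space \<mu>X = {x\<in>X. limit_map x \<in> V}" by (auto simp: MX.space_eq)
  ultimately show "limit_map -` V \<inter> space \<mu>X \<in> sets \<mu>X" by simp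
qed

lemma eventually_coupled_close:
  assumes \<delta>: "0 < \<delta>"
  shows "eventually (\<lambda>n. \<forall>x y. coupled_at n x y \<longrightarrow> dY y (limit_map x) < \<delta>) U"
proof -
  obtain N where N: "finite N" "N \<subseteq> X" "X \<subseteq> (\<Union>s\<in>N. MX.mball s (\<delta>/4))"
    using MX.finite_mball_cover[of "\<delta>/4"] \<delta> by auto
  have "eventually (\<lambda>n. (\<forall>s\<in>N. dY (partner s n) (limit_map s) < \<delta>/4) \<and> r n < \<delta>/20) U"
    using N(1,2) \<delta> by (intro eventually_conj eventually_ball_finite ballI eventually_dist_partner
        eventually_r_less) auto
  then show ?thesis
  proof (rule eventually_mono, intro allI impI)
    fix n x y
    assume n: "(\<forall>s\<in>N. dY (partner s n) (limit_map s) < \<delta>/4) \<and> r n < \<delta>/20"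
      and xy: "coupled_at n x y"
    then have x: "x \<in> X" and y: "y \<in> Y" using coupled_at_mem by auto
    obtain s where s: "s \<in> N" "x \<in> MX.mball s (\<delta>/4)" using N(3) x by blast
    then have sX: "s \<in> X" using N(2) by blast
    have "\<bar>dX x s - dY y (partner s n)\<bar> \<le> 5 * r n"
      using xy sX by (intro coupled_at_dist coupled_partner)
    moreover have "dY y (limit_map x) \<le> dY y (partner s n) + dY (partner s n) (limit_map s)
        + dY (limit_map s) (limit_map x)"
      using y sX x MY.triangle[of y "partner s n" "limit_map s"] MY.triangle[of y "limit_map s" "limit_map x"]
      by (simp add: partner_in limit_map_in)
    moreover have "dY (limit_map s) (limit_map x) = dX s x" by (rule limit_map_isometric[OF sX x])
    moreover have "dX x s = dX s x" by (rule MX.commute)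
    ultimately show "dY y (limit_map x) < \<delta>"
      using n s unfolding abs_le_iff by auto
  qed
qed

text \<open>With \<open>F\<close> the preimage of \<open>K\<close> and \<open>K\<^sub>\<delta>\<close> a thin open thickening of \<open>K\<close>: almost all the
  \<open>\<pi> n\<close>-mass of \<open>F \<times> Y\<close> sits on coupled pairs, hence on \<open>X \<times> K\<^sub>\<delta>\<close>.\<close>
lemma measure_preimage_le:
  assumes K: "closedin MY.mtopology K"
  shows "measure \<mu>X {x\<in>X. limit_map x \<in> K} \<le> measure \<mu>Y K"
proof (rule field_le_epsilon)
  fix e :: real assume e: "0 < e"
  define F where "F = {x\<in>X. limit_map x \<in> K}"
  have F: "F \<in> sets \<mu>X"
    unfolding F_def using K by (intro MX.closedin_sets closedin_preimage_limit_map)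
  obtain \<delta> where "\<delta> > 0" and K\<delta>: "measure \<mu>Y (\<Union>z\<in>K. MY.mball z \<delta>) \<le> measure \<mu>Y K + e/4"
    using MY.measure_thickening_le[OF K] e by (meson zero_less_divide_iff zero_less_numeral)
  define K\<delta> where "K\<delta> = (\<Union>z\<in>K. MY.mball z \<delta>)"
  have K\<delta>_sets: "K\<delta> \<in> sets \<mu>Y" by (auto simp: K\<delta>_def intro: MY.openin_sets)
  have "e/4 > 0" using e by simp
  from eventually_ex[OF eventually_conj[OF eventually_coupled_close[OF \<open>\<delta> > 0\<close>] eventually_r_less[OF this]]]
  obtain n where close: "\<And>x y. coupled_at n x y \<Longrightarrow> dY y (limit_map x) < \<delta>" and rn: "r n < e/4"
    by blast
  note plan = correspondence_planD[OF plans[of n]]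
  interpret PI: prob_space "\<pi> n" by (rule plan_prob[OF plan(1,2)])
  have sets: "sets (\<pi> n) = sets (\<mu>X \<Otimes>\<^sub>M \<mu>Y)" by (rule plan_sets[OF plan(1,2)])
  have X_sets: "X \<in> sets \<mu>X" using sets.top[of \<mu>X] by (simp add: MX.space_eq)
  have "F \<times> Y \<subseteq> X \<times> K\<delta> \<union> E n"
  proof
    fix z assume "z \<in> F \<times> Y"
    then obtain x y where z: "z = (x, y)" "x \<in> X" "limit_map x \<in> K" "y \<in> Y" by (auto simp: F_def)
    show "z \<in> X \<times> K\<delta> \<union> E n"
    proof (cases "z \<in> E n")
      case False
      then have "dY y (limit_map x) < \<delta>" using z plan(9) by (intro close) auto
      then have "y \<in> K\<delta>" using z by (auto simp: K\<delta>_def MY.commute limit_map_in intro!: bexI[of _ "limit_map x"])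
      then show ?thesis using z by blast
    qed simp
  qed
  then have "measure (\<pi> n) (F \<times> Y) \<le> measure (\<pi> n) (X \<times> K\<delta> \<union> E n)"
    using K\<delta>_sets plan(7) X_sets by (intro PI.finite_measure_mono) (auto simp: sets)
  also have "\<dots> \<le> measure (\<pi> n) (X \<times> K\<delta>) + measure (\<pi> n) (E n)"
    using K\<delta>_sets plan(7) X_sets by (intro measure_Un_le) (auto simp: sets)
  finally have "measure \<mu>X F - \<epsilon> n \<le> measure \<mu>Y K\<delta> + \<epsilon> n + r n"
    using measure_plan_fst_bounds(1)[OF plan(1,2) F] measure_plan_snd_bounds(2)[OF plan(1,2) K\<delta>_sets] plan(8)
    by linarith
  then show "measure \<mu>X {x\<in>X. limit_map x \<in> K} \<le> measure \<mu>Y K + e"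
    using K\<delta> plan(3) rn by (simp add: F_def K\<delta>_def)
qed

lemma distr_limit_map: "distr \<mu>X \<mu>Y limit_map = \<mu>Y"
proof (rule MY.measure_eq_if_closedin_le)
  show "metric_borel_prob Y dY (distr \<mu>X \<mu>Y limit_map)"
    using MY.Metric_space_axioms MX.P.prob_space_distr[OF limit_map_measurable]
    by (auto simp: metric_borel_prob_def metric_borel_prob_axioms_def MY.space_eq MY.sets_eq)
next
  fix K assume K: "closedin MY.mtopology K"
  have "measure (distr \<mu>X \<mu>Y limit_map) K = measure \<mu>X (limit_map -` K \<inter> space \<mu>X)"
    using MY.closedin_sets[OF K] by (rule measure_distr[OF limit_map_measurable])
  also have "limit_map -` K \<inter> space \<mu>X = {x\<in>X. limit_map x \<in> K}" by (auto simp: MX.space_eq)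
  finally show "measure (distr \<mu>X \<mu>Y limit_map) K \<le> measure \<mu>Y K"
    using measure_preimage_le[OF K] by simp
qed

lemma isomorphic: "pmm_isomorphic X dX \<mu>X Y dY \<mu>Y"
  unfolding pmm_isomorphic_def
  using limit_map_bij limit_map_isometric limit_map_measurable distr_limit_map by blast

end

lemma (in pmm_pair) isomorphic_if_PGW_robust_eq_0:
  assumes k: "0 < k" and p: "1 \<le> p" and R: "PGW_robust dX \<mu>X dY \<mu>Y k p = 0"
  shows "pmm_isomorphic X dX \<mu>X Y dY \<mu>Y"
proof -
  define r where "r n = inverse (real (Suc n))" for n
  have "\<forall>n. \<exists>q. case q of (\<epsilon>, \<pi>, c, E) \<Rightarrow> correspondence_plan (r n) \<epsilon> \<pi> c E"
    using correspondence_plan_exists[OF small_plans_if_PGW_robust_eq_0[OF k p R] p]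
    by (simp add: r_def field_simps)
  from choice[OF this] obtain q
    where q: "\<forall>n. case q n of (\<epsilon>, \<pi>, c, E) \<Rightarrow> correspondence_plan (r n) \<epsilon> \<pi> c E" ..
  obtain U where U: "ultrafilter U" "U \<le> sequentially"
    using ex_ultrafilter_le[of sequentially] by auto
  have "(r \<longlongrightarrow> 0) U"
    unfolding r_def using LIMSEQ_inverse_real_of_nat U(2) by (rule tendsto_mono[rotated])
  then interpret plan_sequence X dX \<mu>X Y dY \<mu>Y r "\<lambda>n. fst (q n)" "\<lambda>n. fst (snd (q n))"
      "\<lambda>n. fst (snd (snd (q n)))" "\<lambda>n. snd (snd (snd (q n)))" U
    using q U(1) by unfold_locales (simp_all split: prod.splits)
  show ?thesis by (rule isomorphic)
qed

theorem theorem4p2: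
  fixes X :: "'a set" and dX :: "'a \<Rightarrow> 'a \<Rightarrow> real" and \<mu>X :: "'a measure"
    and Y :: "'b set" and dY :: "'b \<Rightarrow> 'b \<Rightarrow> real" and \<mu>Y :: "'b measure"
    and k :: real and p :: ennreal
  assumes "k > 0" and "1 \<le> p"
    and "pmm_space X dX \<mu>X" and "pmm_compact X dX" and "fully_supported X dX \<mu>X"
    and "pmm_space Y dY \<mu>Y" and "pmm_compact Y dY" and "fully_supported Y dY \<mu>Y"
  shows "PGW_robust dX \<mu>X dY \<mu>Y k p = 0 \<longleftrightarrow> pmm_isomorphic X dX \<mu>X Y dY \<mu>Y"
proof -
  interpret pmm_pair X dX \<mu>X Y dY \<mu>Y
    using assms(3-8) by (auto simp: pmm_pair_def intro: compact_pmm_spaceI)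
  show ?thesis
    using isomorphic_if_PGW_robust_eq_0[OF assms(1,2)] PGW_robust_eq_0_if_isomorphic[OF _ assms(2)]
    by blast
qed

end
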